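(* Let $\varepsilon>0$ and let $f$ be holomorphic on $(1+\varepsilon)\mathbb{D}=\{z\in\mathbb{C}:|z|<1+\varepsilon\}$ such that $f(\overline{\mathbb{D}})=\overline{\mathbb{D}}$ and $f((1+\varepsilon)\mathbb{D})\subset(1+\varepsilon)\mathbb{D}$. Then $f$ is a rotation, i.e. there is $\beta\in\mathbb{C}$ with $|\beta|=1$ such that $f(z)=\beta z$ for all $z$.
   Context: $\mathbb{D}$ is the open unit disc and $\overline{\mathbb{D}}$ its closure. *)

theory Defs
  imports "HOL-Complex_Analysis.Complex_Analysis"
begin

end

theory Submission
  imports Defs
begin

(* Rescaling by r = 1 + \<epsilon> turns f into a holomorphic self-map h z = f (r z) / r of the unit
   disc that attains every point of the circle of radius 1/r somewhere in the closed disc of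
   radius 1/r. By Schwarz-Pick, the pseudo-hyperbolic distance from h 0 to h \<zeta> is at most
   |\<zeta>| \<le> 1/r; taking for h \<zeta> the point of that circle opposite to h 0 makes the distance
   exceed 1/r unless h 0 = 0. Then the preimage of 1/r gives equality in the Schwarz lemma,
   so h, and hence f, is a rotation. *)

lemma Schwarz_Pick_origin:
  assumes holh: "h holomorphic_on ball 0 1"
    and maps: "\<And>z. norm z < 1 \<Longrightarrow> norm (h z) < 1"
    and z: "norm z < 1"
  shows "norm (Moebius_function 0 (h 0) (h z)) \<le> norm z"
proof -
  have h0: "norm (h 0) < 1"
    using maps by simp
  have "(Moebius_function 0 (h 0) \<circ> h) holomorphic_on ball 0 1"
    using maps by (intro holomorphic_on_compose_gen[OF holh Moebius_function_holomorphic[OF h0]]) auto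
  moreover have "norm ((Moebius_function 0 (h 0) \<circ> h) w) < 1" if "norm w < 1" for w
    using Moebius_function_norm_lt_1[OF h0 maps[OF that]] by simp
  ultimately show ?thesis
    using Schwarz_Lemma(1)[of "Moebius_function 0 (h 0) \<circ> h", OF _ _ _ z]
    by (simp add: Moebius_function_eq_zero)
qed

lemma norm_Moebius_function_opposite:
  fixes s t :: real
  assumes u: "norm u = 1" and "0 \<le> s" "0 \<le> t"
  shows "norm (Moebius_function 0 (of_real t * u) (- (of_real s * u))) = (s + t) / (1 + s * t)"
proof -
  have "cnj u * u = 1"
    using u by (metis complex_norm_square mult.commute of_real_1 power_one)
  then have eq: "Moebius_function 0 (of_real t * u) (- (of_real s * u)) = - (of_real (s + t) * u) / of_real (1 + s * t)"
    by (simp add: Moebius_function_simple algebra_simps)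
  show ?thesis
    unfolding eq norm_divide norm_mult norm_minus_cancel norm_of_real using assms by simp
qed

lemma disc_self_map_fixes_origin:
  assumes holh: "h holomorphic_on ball 0 1"
    and maps: "\<And>z. norm z < 1 \<Longrightarrow> norm (h z) < 1"
    and s: "0 < s" "s < 1"
    and hits: "\<And>w. norm w = 1 \<Longrightarrow> \<exists>\<zeta>. norm \<zeta> \<le> s \<and> h \<zeta> = of_real s * w"
  shows "h 0 = 0"
proof (rule ccontr)
  assume "h 0 \<noteq> 0"
  define t where "t = norm (h 0)"
  define u where "u = h 0 / of_real t"
  have t: "0 < t" "t < 1"
    using \<open>h 0 \<noteq> 0\<close> maps[of 0] by (auto simp: t_def)
  have u: "norm u = 1" and h0: "h 0 = of_real t * u"
    using t by (auto simp: u_def t_def norm_divide)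
  obtain \<zeta> where \<zeta>: "norm \<zeta> \<le> s" "h \<zeta> = - (of_real s * u)"
    using hits[of "- u"] u by auto
  have "(s + t) / (1 + s * t) = norm (Moebius_function 0 (h 0) (h \<zeta>))"
    using norm_Moebius_function_opposite[OF u, of s t] s t by (simp add: h0 \<zeta>(2))
  also have "\<dots> \<le> norm \<zeta>"
    using Schwarz_Pick_origin[OF holh maps] \<zeta>(1) s by simp
  also have "\<dots> \<le> s"
    by (fact \<zeta>(1))
  finally have "s + t \<le> s * (1 + s * t)"
    using s t by (simp add: pos_divide_le_eq add_pos_pos)
  moreover have "s * (s * t) < t"
    using s t by (smt (verit) mult_le_cancel_left_pos mult_le_cancel_right1)
  ultimately show False
    by (simp add: algebra_simps)
qed

lemma disc_self_map_is_rotation: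
  assumes holh: "h holomorphic_on ball 0 1"
    and maps: "\<And>z. norm z < 1 \<Longrightarrow> norm (h z) < 1"
    and s: "0 < s" "s < 1"
    and hits: "\<And>w. norm w = 1 \<Longrightarrow> \<exists>\<zeta>. norm \<zeta> \<le> s \<and> h \<zeta> = of_real s * w"
  shows "\<exists>\<alpha>. norm \<alpha> = 1 \<and> (\<forall>z. norm z < 1 \<longrightarrow> h z = \<alpha> * z)"
proof -
  have h0: "h 0 = 0"
    by (rule disc_self_map_fixes_origin[OF assms])
  obtain \<zeta> where \<zeta>: "norm \<zeta> \<le> s" "h \<zeta> = of_real s"
    using hits[of 1] by auto
  have \<zeta>1: "norm \<zeta> < 1"
    using \<zeta>(1) s by linarith
  moreover have "\<zeta> \<noteq> 0"
    using h0 \<zeta>(2) s by auto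
  moreover have "norm (h \<zeta>) = norm \<zeta>"
    using Schwarz_Lemma(1)[OF holh h0 maps \<zeta>1] \<zeta> s by simp
  ultimately show ?thesis
    using Schwarz_Lemma(3)[OF holh h0 maps \<zeta>1] by blast
qed

lemma rescaled_self_map_of_ball:
  fixes f :: "complex \<Rightarrow> complex" and r :: real
  assumes r: "0 < r" and holf: "f holomorphic_on ball 0 r" and maps: "f ` ball 0 r \<subseteq> ball 0 r"
  shows "(\<lambda>z. f (of_real r * z) / of_real r) holomorphic_on ball 0 1"
    and "norm z < 1 \<Longrightarrow> norm (f (of_real r * z) / of_real r) < 1"
proof -
  have scale: "of_real r * z \<in> ball 0 r \<longleftrightarrow> norm z < 1" for z :: complex
    using r by (simp add: norm_mult)
  have "(f \<circ> (\<lambda>z. of_real r * z)) holomorphic_on ball 0 1"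
    using scale by (intro holomorphic_on_compose_gen[OF _ holf]) (auto intro: holomorphic_intros)
  then show "(\<lambda>z. f (of_real r * z) / of_real r) holomorphic_on ball 0 1"
    using r by (intro holomorphic_intros) (auto simp: o_def)
  show "norm (f (of_real r * z) / of_real r) < 1" if "norm z < 1"
  proof -
    have "f (of_real r * z) \<in> ball 0 r"
      using maps scale[of z] that by blast
    then show ?thesis
      using r by (simp add: norm_divide)
  qed
qed

theorem lemma1p5:
  fixes f :: "complex \<Rightarrow> complex" and \<epsilon> :: real
  assumes "\<epsilon> > 0"
    and "f holomorphic_on ball 0 (1 + \<epsilon>)"
    and "f ` cball 0 1 = cball 0 1"
    and "f ` ball 0 (1 + \<epsilon>) \<subseteq> ball 0 (1 + \<epsilon>)"
  shows "\<exists>\<beta>. norm \<beta> = 1 \<and> (\<forall>z\<in>ball 0 (1 + \<epsilon>). f z = \<beta> * z)"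
proof -
  define r where "r = 1 + \<epsilon>"
  define h where "h z = f (of_real r * z) / of_real r" for z
  have r: "1 < r"
    using assms(1) by (simp add: r_def)
  have holh: "h holomorphic_on ball 0 1" and maps: "\<And>z. norm z < 1 \<Longrightarrow> norm (h z) < 1"
    using rescaled_self_map_of_ball[of r f] r assms(2,4)
    unfolding h_def[abs_def] r_def by auto
  have hits: "\<exists>\<zeta>. norm \<zeta> \<le> 1 / r \<and> h \<zeta> = of_real (1 / r) * w" if "norm w = 1" for w
  proof -
    have "w \<in> f ` cball 0 1"
      using assms(3) that by simp
    then obtain z where "norm z \<le> 1" "f z = w"
      by auto
    then show ?thesis
      using r by (intro exI[of _ "z / of_real r"]) (simp add: h_def norm_divide divide_right_mono)
  qed
  obtain \<alpha> where \<alpha>: "norm \<alpha> = 1" "\<And>z. norm z < 1 \<Longrightarrow> h z = \<alpha> * z"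
    using disc_self_map_is_rotation[OF holh maps _ _ hits] r by auto
  have "f y = \<alpha> * y" if "norm y < r" for y
  proof -
    have "f y = of_real r * h (y / of_real r)"
      using r by (simp add: h_def)
    also have "\<dots> = \<alpha> * y"
      using \<alpha>(2)[of "y / of_real r"] that r by (simp add: norm_divide)
    finally show ?thesis .
  qed
  then show ?thesis
    using \<alpha>(1) by (auto simp: r_def)
qed

end
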